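(* Fix real numbers $L,\ell_1,\ell_2>0$. There is a unique set map $B_L^{\ell_1,\ell_2}:\mathcal{G}(L,\ell_1+\ell_2)\to\mathcal{G}(L,\ell_2+\ell_1)$ such that $B_L^{\ell_1,\ell_2}(\phi_1\otimes\phi_2)=\phi_2\otimes\phi_1$ for all $\ell'_1,\ell'_2>0$ with $\ell'_1+\ell'_2=L$ and all $\phi_1\in\mathcal{G}(\ell'_1,\ell_1)$, $\phi_2\in\mathcal{G}(\ell'_2,\ell_2)$. Moreover, $B_L^{\ell_1,\ell_2}$ is a homeomorphism.
   Context: $\mathcal{G}$ is the category whose objects are the real numbers $\ell>0$, with $\mathcal{G}(\ell_1,\ell_2)$ the set of nondecreasing homeomorphisms $[0,\ell_1]\to[0,\ell_2]$ (necessarily sending $0\mapsto0$, $\ell_1\mapsto\ell_2$), equipped with the compact-open topology, and composition given by composition of maps. For $\phi_i:[0,\ell_i]\to[0,\ell'_i]$ ($i=1,2$), $\phi_1\otimes\phi_2:[0,\ell_1+\ell_2]\to[0,\ell'_1+\ell'_2]$ is defined by $(\phi_1\otimes\phi_2)(t)=\phi_1(t)$ for $0\le t\le\ell_1$ and $\phi_2(t-\ell_1)+\ell'_1$ for $\ell_1\le t\le\ell_1+\ell_2$. Note $\ell_1+\ell_2=\ell_2+\ell_1$ as objects, so $B_L^{\ell_1,\ell_2}$ is a self-map of the space $\mathcal{G}(L,\ell_1+\ell_2)$. *)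

theory Defs
  imports "HOL-Analysis.Analysis"
begin

text \<open>Morphisms of the category G: nondecreasing homeomorphisms [0,a] -> [0,b],
  represented as functions real => real that are extensional (undefined) outside [0,a].\<close>
definition Gmor :: "real \<Rightarrow> real \<Rightarrow> (real \<Rightarrow> real) set" where
  "Gmor a b = {f. f \<in> extensional {0..a} \<and> mono_on {0..a} f \<and>
                  (\<exists>g. homeomorphism {0..a} {0..b} f g)}"

definition compact_open :: "real \<Rightarrow> real \<Rightarrow> (real \<Rightarrow> real) topology" where
  "compact_open a b = topology (arbitrary union_of
      ((finite intersection_of
         (\<lambda>S. \<exists>K U. compact K \<and> K \<subseteq> {0..a} \<and> open U \<and> S = {f \<in> Gmor a b. f ` K \<subseteq> U}))
       relative_to Gmor a b))"

text \<open>Monoidal product: phi1 : [0,a] -> [0,b], phi2 : [0,c] -> [0,d];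
  result [0,a+c] -> [0,b+d].\<close>
definition tensor :: "real \<Rightarrow> real \<Rightarrow> real \<Rightarrow> (real \<Rightarrow> real) \<Rightarrow> (real \<Rightarrow> real) \<Rightarrow> (real \<Rightarrow> real)" where
  "tensor a c b phi1 phi2 =
     restrict (\<lambda>t. if t \<le> a then phi1 t else phi2 (t - a) + b) {0..a+c}"

end

theory Submission
  imports Defs
begin

text \<open>
  Every \<open>f \<in> \<G>(L, l\<^sub>1 + l\<^sub>2)\<close> is strictly increasing, so it reaches \<open>l\<^sub>1\<close> at exactly one
  point \<open>s \<in> (0, L)\<close>, and cutting at \<open>s\<close> writes \<open>f = \<phi>\<^sub>1 \<otimes> \<phi>\<^sub>2\<close>. Since the cut point of
  a tensor product is recovered from it, \<open>B(f) = \<phi>\<^sub>2 \<otimes> \<phi>\<^sub>1\<close> is forced; this is a window of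
  the doubled map \<open>f \<otimes> f\<close>. The braiding for \<open>(l\<^sub>2, l\<^sub>1)\<close> inverts the one for \<open>(l\<^sub>1, l\<^sub>2)\<close>,
  so only continuity remains. On the compact interval \<open>[0, L]\<close> the compact-open topology
  is the topology of uniform convergence, and \<open>B\<close> is continuous for it because the cut
  point depends continuously on \<open>f\<close> (by strict monotonicity) and \<open>f \<otimes> f\<close> is uniformly
  continuous.
\<close>

lemma continuous_on_restrict_iff: "continuous_on S (restrict f S) \<longleftrightarrow> continuous_on S f"
  by (rule continuous_on_cong) auto

lemma GmorD:
  assumes "f \<in> Gmor L M" "L > 0"
  shows "f \<in> extensional {0..L} \<and> continuous_on {0..L} f \<and> strict_mono_on {0..L} f \<and>
    f 0 = 0 \<and> f L = M"
proof -
  obtain g where ext: "f \<in> extensional {0..L}" and mono: "mono_on {0..L} f"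
    and hom: "homeomorphism {0..L} {0..M} f g"
    using assms(1) unfolding Gmor_def by blast
  have img: "f ` {0..L} = {0..M}"
    using homeomorphism_image1[OF hom] .
  have inj: "inj_on f {0..L}"
    by (rule inj_onI) (metis homeomorphism_apply1[OF hom])
  have strict: "strict_mono_on {0..L} f"
  proof (rule monotone_onI)
    fix r s assume "r \<in> {0..L}" "s \<in> {0..L}" "r < s"
    then show "f r < f s"
      using mono inj by (metis inj_onD mono_onD order_less_le)
  qed
  have "f 0 \<in> {0..M}" "f L \<in> {0..M}"
    using img assms(2) by auto
  then have lo: "f 0 \<ge> 0" "f L \<le> M" "0 \<le> M"
    by auto
  then have "0 \<in> f ` {0..L}" "M \<in> f ` {0..L}"
    unfolding img by auto
  then obtain a b where a: "a \<in> {0..L}" "f a = 0" and b: "b \<in> {0..L}" "f b = M"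
    by (metis imageE)
  have hi: "f 0 \<le> 0" "f L \<ge> M"
    using mono_onD[OF mono] a b assms(2) by force+
  show ?thesis
    using ext strict homeomorphism_cont1[OF hom] lo hi by auto
qed

lemma GmorI:
  assumes "L > 0" and ext: "f \<in> extensional {0..L}" and cont: "continuous_on {0..L} f"
    and strict: "strict_mono_on {0..L} f" and ends: "f 0 = 0" "f L = M"
  shows "f \<in> Gmor L M"
proof -
  have mono: "mono_on {0..L} f"
    using strict by (auto simp: strict_mono_on_def mono_on_def order_le_less)
  have "f ` {0..L} \<subseteq> {0..M}"
  proof (rule image_subsetI)
    fix x assume "x \<in> {0..L}"
    then have "f 0 \<le> f x" "f x \<le> f L"
      using \<open>L > 0\<close> by (auto intro: mono_onD[OF mono])
    then show "f x \<in> {0..M}"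
      using ends by simp
  qed
  moreover have "{0..M} \<subseteq> f ` {0..L}"
    using IVT'[of f 0 _ L] cont ends \<open>L > 0\<close> by (force simp: image_iff)
  ultimately obtain g where "homeomorphism {0..L} {0..M} f g"
    using homeomorphism_compact[OF compact_Icc cont _ strict_mono_on_imp_inj_on[OF strict]]
    by blast
  then show ?thesis
    unfolding Gmor_def using ext mono by blast
qed

lemma Gmor_extensional: "f \<in> Gmor L M \<Longrightarrow> f \<in> extensional {0..L}"
  unfolding Gmor_def by blast

lemma Gmor_continuous_on: "f \<in> Gmor L M \<Longrightarrow> L > 0 \<Longrightarrow> continuous_on {0..L} f"
  by (simp add: GmorD)

lemma Gmor_strict_mono_on: "f \<in> Gmor L M \<Longrightarrow> L > 0 \<Longrightarrow> strict_mono_on {0..L} f"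
  by (simp add: GmorD)

lemma Gmor_zero: "f \<in> Gmor L M \<Longrightarrow> L > 0 \<Longrightarrow> f 0 = 0"
  by (simp add: GmorD)

lemma Gmor_end: "f \<in> Gmor L M \<Longrightarrow> L > 0 \<Longrightarrow> f L = M"
  by (simp add: GmorD)

lemma Gmor_less_iff:
  assumes "f \<in> Gmor L M" "L > 0" "x \<in> {0..L}" "y \<in> {0..L}"
  shows "f x < f y \<longleftrightarrow> x < y"
  using strict_mono_on_less[OF Gmor_strict_mono_on[OF assms(1,2)] assms(3,4)] .

lemma Gmor_image: "f \<in> Gmor L M \<Longrightarrow> f ` {0..L} = {0..M}"
  unfolding Gmor_def using homeomorphism_image1 by blast

lemma Gmor_inv_into:
  assumes "f \<in> Gmor L M" "y \<in> {0..M}"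
  shows "inv_into {0..L} f y \<in> {0..L}" "f (inv_into {0..L} f y) = y"
proof -
  have "y \<in> f ` {0..L}"
    using Gmor_image[OF assms(1)] assms(2) by simp
  then show "inv_into {0..L} f y \<in> {0..L}" "f (inv_into {0..L} f y) = y"
    by (rule inv_into_into, rule f_inv_into_f)
qed

lemma Gmor_inv_into_eq:
  assumes "f \<in> Gmor L M" "L > 0" "s \<in> {0..L}"
  shows "inv_into {0..L} f (f s) = s"
  using inv_into_f_f[OF strict_mono_on_imp_inj_on[OF Gmor_strict_mono_on[OF assms(1,2)]] assms(3)] .

lemma Gmor_inv_into_interior:
  assumes f: "f \<in> Gmor L M" and "L > 0" and y: "y \<in> {0<..<M}"
  shows "inv_into {0..L} f y \<in> {0<..<L}"
proof -
  define s where "s = inv_into {0..L} f y"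
  have "s \<in> {0..L}" "f s = y"
    using Gmor_inv_into[OF f] y unfolding s_def by auto
  moreover have "s \<noteq> 0" "s \<noteq> L"
    using \<open>f s = y\<close> Gmor_zero[OF f] Gmor_end[OF f] assms by auto
  ultimately show ?thesis
    unfolding s_def[symmetric] by auto
qed

lemma tensor_extensional: "tensor a c b phi1 phi2 \<in> extensional {0..a + c}"
  unfolding tensor_def by simp

lemma tensor_left: "c \<ge> 0 \<Longrightarrow> t \<in> {0..a} \<Longrightarrow> tensor a c b phi1 phi2 t = phi1 t"
  unfolding tensor_def by simp

lemma tensor_right:
  assumes "phi1 \<in> Gmor a b" "phi2 \<in> Gmor c d" "a > 0" "c > 0" "t \<in> {a..a + c}"
  shows "tensor a c b phi1 phi2 t = phi2 (t - a) + b"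
  using assms Gmor_end[of phi1 a b] Gmor_zero[of phi2 c d] unfolding tensor_def by auto

lemma tensor_continuous_on:
  assumes phi1: "phi1 \<in> Gmor a b" and phi2: "phi2 \<in> Gmor c d" and "a > 0" "c > 0"
  shows "continuous_on {0..a + c} (tensor a c b phi1 phi2)"
proof -
  have "continuous_on {0..a + c} (\<lambda>t. if t \<le> a then phi1 t else phi2 (t - a) + b)"
  proof (rule continuous_on_cases_le)
    show "continuous_on {t \<in> {0..a + c}. t \<le> a} phi1"
      using Gmor_continuous_on[OF phi1 \<open>a > 0\<close>] by (rule continuous_on_subset) auto
    have "continuous_on {t \<in> {0..a + c}. a \<le> t} (\<lambda>t. phi2 (t - a))"
      by (rule continuous_on_compose2[OF Gmor_continuous_on[OF phi2 \<open>c > 0\<close>]])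
        (auto intro: continuous_intros)
    then show "continuous_on {t \<in> {0..a + c}. a \<le> t} (\<lambda>t. phi2 (t - a) + b)"
      by (intro continuous_intros)
  qed (use Gmor_end[OF phi1 \<open>a > 0\<close>] Gmor_zero[OF phi2 \<open>c > 0\<close>] in \<open>auto intro: continuous_intros\<close>)
  then show ?thesis
    unfolding tensor_def continuous_on_restrict_iff .
qed

lemma tensor_Gmor:
  assumes phi1: "phi1 \<in> Gmor a b" and phi2: "phi2 \<in> Gmor c d" and "a > 0" "c > 0"
  shows "tensor a c b phi1 phi2 \<in> Gmor (a + c) (b + d)"
proof (rule GmorI)
  show "continuous_on {0..a + c} (tensor a c b phi1 phi2)"
    by (rule tensor_continuous_on[OF assms])
  show "strict_mono_on {0..a + c} (tensor a c b phi1 phi2)"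
  proof (rule monotone_onI)
    fix x y assume xy: "x \<in> {0..a + c}" "y \<in> {0..a + c}" "x < y"
    consider "y \<le> a" | "x \<le> a" "a < y" | "a < x"
      using xy by linarith
    then show "tensor a c b phi1 phi2 x < tensor a c b phi1 phi2 y"
    proof cases
      case 1
      then show ?thesis
        using xy Gmor_less_iff[OF phi1 \<open>a > 0\<close>, of x y] unfolding tensor_def by simp
    next
      case 2
      have "phi1 x \<le> b"
        using Gmor_image[OF phi1] xy 2 by auto
      moreover have "0 < phi2 (y - a)"
        using Gmor_less_iff[OF phi2 \<open>c > 0\<close>, of 0 "y - a"] Gmor_zero[OF phi2 \<open>c > 0\<close>] xy 2
        by simp
      ultimately show ?thesis
        using xy 2 unfolding tensor_def by simp
    next
      case 3
      then show ?thesis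
        using xy Gmor_less_iff[OF phi2 \<open>c > 0\<close>, of "x - a" "y - a"] unfolding tensor_def by simp
    qed
  qed
  show "tensor a c b phi1 phi2 0 = 0" "tensor a c b phi1 phi2 (a + c) = b + d"
    using assms Gmor_zero[OF phi1] Gmor_end[OF phi2] unfolding tensor_def by auto
qed (use assms tensor_extensional in auto)

lemma Gmor_splitE:
  assumes f: "f \<in> Gmor L M" and s: "s \<in> {0<..<L}"
  obtains phi1 phi2 where "phi1 \<in> Gmor s (f s)" "phi2 \<in> Gmor (L - s) (M - f s)"
    "f = tensor s (L - s) (f s) phi1 phi2"
proof -
  have "L > 0"
    using s by auto
  note cont = Gmor_continuous_on[OF f \<open>L > 0\<close>] and strict = Gmor_strict_mono_on[OF f \<open>L > 0\<close>]
  let ?g = "\<lambda>t. f (t + s) - f s"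
  have left: "restrict f {0..s} \<in> Gmor s (f s)"
  proof (rule GmorI)
    show "continuous_on {0..s} (restrict f {0..s})"
      unfolding continuous_on_restrict_iff using s by (auto intro: continuous_on_subset[OF cont])
    show "strict_mono_on {0..s} (restrict f {0..s})"
      using strict s by (auto simp: strict_mono_on_def)
  qed (use s Gmor_zero[OF f \<open>L > 0\<close>] in auto)
  have right: "restrict ?g {0..L - s} \<in> Gmor (L - s) (M - f s)"
  proof (rule GmorI)
    have "continuous_on {0..L - s} (\<lambda>t. f (t + s))"
      using s by (intro continuous_on_compose2[OF cont]) (auto intro: continuous_intros)
    then have "continuous_on {0..L - s} ?g"
      by (intro continuous_intros)
    then show "continuous_on {0..L - s} (restrict ?g {0..L - s})"
      unfolding continuous_on_restrict_iff .
    show "strict_mono_on {0..L - s} (restrict ?g {0..L - s})"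
      using strict s by (auto simp: strict_mono_on_def)
  qed (use s Gmor_end[OF f \<open>L > 0\<close>] in auto)
  have "f = tensor s (L - s) (f s) (restrict f {0..s}) (restrict ?g {0..L - s})" (is "f = ?h")
  proof
    fix t
    show "f t = ?h t"
    proof (cases "t \<in> {0..L}")
      case True
      then show ?thesis
        using s unfolding tensor_def by (cases "t \<le> s") auto
    next
      case False
      then show ?thesis
        using Gmor_extensional[OF f] unfolding tensor_def extensional_def by auto
    qed
  qed
  from left right this show thesis
    by (rule that)
qed

lemma inv_into_tensor:
  assumes "phi1 \<in> Gmor a b" "phi2 \<in> Gmor c d" "a > 0" "c > 0"
  shows "inv_into {0..a + c} (tensor a c b phi1 phi2) b = a"
proof -
  have "tensor a c b phi1 phi2 a = b"
    using assms by (simp add: tensor_left Gmor_end)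
  then show ?thesis
    using Gmor_inv_into_eq[OF tensor_Gmor[OF assms], of a] assms by simp
qed

lemma Gmor_tensorE:
  assumes f: "f \<in> Gmor L (l1 + l2)" and "L > 0" "l1 > 0" "l2 > 0"
  obtains a c phi1 phi2 where "a > 0" "c > 0" "a + c = L" "phi1 \<in> Gmor a l1" "phi2 \<in> Gmor c l2"
    "f = tensor a c l1 phi1 phi2"
proof -
  define s where "s = inv_into {0..L} f l1"
  have s: "s \<in> {0<..<L}" "f s = l1"
    using Gmor_inv_into_interior[OF f] Gmor_inv_into[OF f] assms unfolding s_def by auto
  obtain phi1 phi2 where "phi1 \<in> Gmor s l1" "phi2 \<in> Gmor (L - s) l2"
    "f = tensor s (L - s) l1 phi1 phi2"
    using Gmor_splitE[OF f s(1)] unfolding s(2) by auto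
  then show thesis
    using s(1) by (intro that[of s "L - s" phi1 phi2]) auto
qed

text \<open>
  Cutting \<open>f\<close> where it reaches \<open>l1\<close> gives \<open>f = \<phi>\<^sub>1 \<otimes> \<phi>\<^sub>2\<close>; the window of length \<open>L\<close> of
  \<open>f \<otimes> f\<close> starting at the cut, shifted down by \<open>l1\<close>, is \<open>\<phi>\<^sub>2 \<otimes> \<phi>\<^sub>1\<close>.
\<close>
definition braid :: "real \<Rightarrow> real \<Rightarrow> real \<Rightarrow> (real \<Rightarrow> real) \<Rightarrow> real \<Rightarrow> real" where
  "braid L l1 l2 = (\<lambda>f \<in> Gmor L (l1 + l2).
     \<lambda>t \<in> {0..L}. tensor L L (l1 + l2) f f (t + inv_into {0..L} f l1) - l1)"

lemma braid_Gmor: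
  assumes "L > 0" "l1 > 0" "l2 > 0" and f: "f \<in> Gmor L (l1 + l2)"
  shows "braid L l1 l2 f \<in> Gmor L (l2 + l1)"
proof -
  define s where "s = inv_into {0..L} f l1"
  have s: "s \<in> {0..L}" "f s = l1"
    using Gmor_inv_into[OF f] assms unfolding s_def by auto
  define h where "h = tensor L L (l1 + l2) f f"
  have h: "h \<in> Gmor (L + L) (l1 + l2 + (l1 + l2))"
    unfolding h_def using tensor_Gmor[OF f f] assms by simp
  have "braid L l1 l2 f = (\<lambda>t \<in> {0..L}. h (t + s) - l1)"
    using f by (simp add: braid_def s_def h_def)
  also have "\<dots> \<in> Gmor L (l2 + l1)"
  proof (rule GmorI)
    have "continuous_on {0..L} (\<lambda>t. h (t + s))"
      using s \<open>L > 0\<close>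
      by (intro continuous_on_compose2[OF Gmor_continuous_on[OF h]]) (auto intro: continuous_intros)
    then show "continuous_on {0..L} (\<lambda>t \<in> {0..L}. h (t + s) - l1)"
      unfolding continuous_on_restrict_iff by (intro continuous_intros)
    show "strict_mono_on {0..L} (\<lambda>t \<in> {0..L}. h (t + s) - l1)"
      using s \<open>L > 0\<close> by (auto intro!: monotone_onI simp: Gmor_less_iff[OF h])
    show "(\<lambda>t \<in> {0..L}. h (t + s) - l1) 0 = 0"
      using s \<open>L > 0\<close> unfolding h_def by (simp add: tensor_left)
    show "(\<lambda>t \<in> {0..L}. h (t + s) - l1) L = l2 + l1"
      using s \<open>L > 0\<close> unfolding h_def by (simp add: tensor_right[OF f f])
  qed (use \<open>L > 0\<close> in auto)
  finally show ?thesis .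
qed

lemma braid_PiE:
  assumes "L > 0" "l1 > 0" "l2 > 0"
  shows "braid L l1 l2 \<in> Gmor L (l1 + l2) \<rightarrow>\<^sub>E Gmor L (l2 + l1)"
  using braid_Gmor[OF assms] by (auto simp: braid_def)

lemma braid_tensor:
  assumes pos: "l1 > 0" "l2 > 0" "a > 0" "c > 0" and L: "a + c = L"
    and phi1: "phi1 \<in> Gmor a l1" and phi2: "phi2 \<in> Gmor c l2"
  shows "braid L l1 l2 (tensor a c l1 phi1 phi2) = tensor c a l2 phi2 phi1"
  unfolding L[symmetric]
proof
  fix t
  let ?f = "tensor a c l1 phi1 phi2"
  have f: "?f \<in> Gmor (a + c) (l1 + l2)"
    using tensor_Gmor[OF phi1 phi2] pos by simp
  have s: "inv_into {0..a + c} ?f l1 = a"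
    using inv_into_tensor[OF phi1 phi2] pos by simp
  show "braid (a + c) l1 l2 ?f t = tensor c a l2 phi2 phi1 t"
  proof (cases "t \<in> {0..a + c}")
    case True
    then have "braid (a + c) l1 l2 ?f t = tensor (a + c) (a + c) (l1 + l2) ?f ?f (t + a) - l1"
      using f s by (simp add: braid_def)
    also have "\<dots> = tensor c a l2 phi2 phi1 t"
    proof (cases "t \<le> c")
      case True
      then show ?thesis
        using \<open>t \<in> {0..a + c}\<close> pos
        by (simp add: tensor_left tensor_right[OF phi1 phi2])
    next
      case False
      then show ?thesis
        using \<open>t \<in> {0..a + c}\<close> pos
        by (simp add: tensor_left tensor_right[OF f f] tensor_right[OF phi2 phi1])
    qed
    finally show ?thesis .
  next
    case False
    then show ?thesis
      using Gmor_extensional[OF braid_Gmor[OF _ _ _ f]] tensor_extensional[of c a] pos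
      by (simp add: extensional_def add.commute)
  qed
qed

lemma braid_unique:
  assumes "L > 0" "l1 > 0" "l2 > 0" and B: "B \<in> Gmor L (l1 + l2) \<rightarrow>\<^sub>E Gmor L (l2 + l1)"
    and B_tensor: "\<And>a c phi1 phi2. a > 0 \<Longrightarrow> c > 0 \<Longrightarrow> a + c = L \<Longrightarrow> phi1 \<in> Gmor a l1 \<Longrightarrow>
      phi2 \<in> Gmor c l2 \<Longrightarrow> B (tensor a c l1 phi1 phi2) = tensor c a l2 phi2 phi1"
  shows "B = braid L l1 l2"
proof
  fix f
  show "B f = braid L l1 l2 f"
  proof (cases "f \<in> Gmor L (l1 + l2)")
    case True
    then obtain a c phi1 phi2 where ac: "a > 0" "c > 0" "a + c = L"
      and phi: "phi1 \<in> Gmor a l1" "phi2 \<in> Gmor c l2" and f: "f = tensor a c l1 phi1 phi2"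
      using Gmor_tensorE[OF True assms(1-3)] by metis
    then show ?thesis
      using B_tensor[OF ac phi] braid_tensor[OF assms(2,3) ac phi] by simp
  next
    case False
    then show ?thesis
      using B braid_PiE[OF assms(1-3)] by (auto simp: PiE_def extensional_def)
  qed
qed

lemma braid_braid:
  assumes "L > 0" "l1 > 0" "l2 > 0" and f: "f \<in> Gmor L (l1 + l2)"
  shows "braid L l2 l1 (braid L l1 l2 f) = f"
proof -
  obtain a c phi1 phi2 where ac: "a > 0" "c > 0" "a + c = L"
    and phi: "phi1 \<in> Gmor a l1" "phi2 \<in> Gmor c l2" and f: "f = tensor a c l1 phi1 phi2"
    using Gmor_tensorE[OF f assms(1-3)] by metis
  have "c + a = L"
    using ac(3) by linarith
  have "braid L l2 l1 (braid L l1 l2 f) = braid L l2 l1 (tensor c a l2 phi2 phi1)"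
    unfolding f braid_tensor[OF assms(2,3) ac phi] ..
  also have "\<dots> = tensor a c l1 phi1 phi2"
    by (rule braid_tensor[OF assms(3,2) ac(2,1) \<open>c + a = L\<close> phi(2,1)])
  finally show ?thesis
    unfolding f .
qed

definition compact_open_topology ::
    "'a::topological_space set \<Rightarrow> ('a \<Rightarrow> 'b::topological_space) set \<Rightarrow> ('a \<Rightarrow> 'b) topology" where
  "compact_open_topology D F = topology (arbitrary union_of
     ((finite intersection_of (\<lambda>S. \<exists>K U. compact K \<and> K \<subseteq> D \<and> open U \<and> S = {f \<in> F. f ` K \<subseteq> U}))
       relative_to F))"

lemma topspace_compact_open_topology: "topspace (compact_open_topology D F) = F"
  by (simp add: compact_open_topology_def)

lemma openin_compact_open_topology_subbasic:
  assumes "compact K" "K \<subseteq> D" "open U"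
  shows "openin (compact_open_topology D F) {f \<in> F. f ` K \<subseteq> U}"
proof -
  let ?P = "\<lambda>S. \<exists>K U. compact K \<and> K \<subseteq> D \<and> open U \<and> S = {f \<in> F. f ` K \<subseteq> U}"
  have eq: "F \<inter> {f \<in> F. f ` K \<subseteq> U} = {f \<in> F. f ` K \<subseteq> U}"
    by blast
  have "?P {f \<in> F. f ` K \<subseteq> U}"
    using assms by blast
  then have "(finite intersection_of ?P relative_to F) (F \<inter> {f \<in> F. f ` K \<subseteq> U})"
    by (intro relative_to_inc finite_intersection_of_inc)
  then have "(finite intersection_of ?P relative_to F) {f \<in> F. f ` K \<subseteq> U}"
    by (simp only: eq)
  then show ?thesis
    unfolding compact_open_topology_def openin_subbase by (rule arbitrary_union_of_inc)
qed

definition uniformly_open :: "'a set \<Rightarrow> ('a \<Rightarrow> 'b::metric_space) set \<Rightarrow> ('a \<Rightarrow> 'b) set \<Rightarrow> bool" where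
  "uniformly_open D F S \<longleftrightarrow>
     S \<subseteq> F \<and> (\<forall>f\<in>S. \<exists>e>0. \<forall>g\<in>F. (\<forall>t\<in>D. dist (g t) (f t) < e) \<longrightarrow> g \<in> S)"

lemma istopology_uniformly_open: "istopology (uniformly_open D F)"
  unfolding istopology_def
proof (intro conjI allI impI)
  fix S T assume "uniformly_open D F S" "uniformly_open D F T"
  show "uniformly_open D F (S \<inter> T)"
    unfolding uniformly_open_def
  proof (intro conjI ballI)
    fix f assume "f \<in> S \<inter> T"
    then have "f \<in> S" "f \<in> T"
      by auto
    obtain e1 where "e1 > 0" and e1: "\<forall>g\<in>F. (\<forall>t\<in>D. dist (g t) (f t) < e1) \<longrightarrow> g \<in> S"
      using \<open>uniformly_open D F S\<close> \<open>f \<in> S\<close> unfolding uniformly_open_def by blast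
    obtain e2 where "e2 > 0" and e2: "\<forall>g\<in>F. (\<forall>t\<in>D. dist (g t) (f t) < e2) \<longrightarrow> g \<in> T"
      using \<open>uniformly_open D F T\<close> \<open>f \<in> T\<close> unfolding uniformly_open_def by blast
    show "\<exists>e>0. \<forall>g\<in>F. (\<forall>t\<in>D. dist (g t) (f t) < e) \<longrightarrow> g \<in> S \<inter> T"
    proof (intro exI[of _ "min e1 e2"] conjI ballI impI)
      fix g assume "g \<in> F" "\<forall>t\<in>D. dist (g t) (f t) < min e1 e2"
      then show "g \<in> S \<inter> T"
        using e1 e2 by simp
    qed (simp add: \<open>e1 > 0\<close> \<open>e2 > 0\<close>)
  qed (use \<open>uniformly_open D F S\<close> in \<open>auto simp: uniformly_open_def\<close>)
next
  fix \<K> assume \<K>: "\<forall>S\<in>\<K>. uniformly_open D F S"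
  show "uniformly_open D F (\<Union>\<K>)"
    unfolding uniformly_open_def
  proof (intro conjI ballI)
    fix f assume "f \<in> \<Union>\<K>"
    then obtain S where "S \<in> \<K>" "f \<in> S"
      by blast
    moreover have "uniformly_open D F S"
      using \<K> \<open>S \<in> \<K>\<close> by blast
    ultimately obtain e where "e > 0" and e: "\<forall>g\<in>F. (\<forall>t\<in>D. dist (g t) (f t) < e) \<longrightarrow> g \<in> S"
      unfolding uniformly_open_def by blast
    show "\<exists>e>0. \<forall>g\<in>F. (\<forall>t\<in>D. dist (g t) (f t) < e) \<longrightarrow> g \<in> \<Union>\<K>"
    proof (intro exI[of _ e] conjI ballI impI)
      fix g assume "g \<in> F" "\<forall>t\<in>D. dist (g t) (f t) < e"
      then show "g \<in> \<Union>\<K>"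
        using e \<open>S \<in> \<K>\<close> by blast
    qed (fact \<open>e > 0\<close>)
  qed (use \<K> in \<open>auto simp: uniformly_open_def\<close>)
qed

definition uniform_topology :: "'a set \<Rightarrow> ('a \<Rightarrow> 'b::metric_space) set \<Rightarrow> ('a \<Rightarrow> 'b) topology" where
  "uniform_topology D F = topology (uniformly_open D F)"

lemma openin_uniform_topology: "openin (uniform_topology D F) = uniformly_open D F"
  unfolding uniform_topology_def using istopology_uniformly_open by (rule topology_inverse')

lemma topspace_uniform_topology: "topspace (uniform_topology D F) = F"
proof
  have "openin (uniform_topology D F) (topspace (uniform_topology D F))"
    by (rule openin_topspace)
  then show "topspace (uniform_topology D F) \<subseteq> F"
    unfolding openin_uniform_topology uniformly_open_def by (rule conjunct1)
  have "openin (uniform_topology D F) F"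
    unfolding openin_uniform_topology uniformly_open_def using zero_less_one by blast
  then show "F \<subseteq> topspace (uniform_topology D F)"
    by (rule openin_subset)
qed

lemma openin_uniform_topology_subbasic:
  fixes D :: "'a::metric_space set" and F :: "('a \<Rightarrow> 'b::metric_space) set"
  assumes cont: "\<And>f. f \<in> F \<Longrightarrow> continuous_on D f"
    and K: "compact K" "K \<subseteq> D" and "open U"
  shows "openin (uniform_topology D F) {f \<in> F. f ` K \<subseteq> U}"
  unfolding openin_uniform_topology uniformly_open_def
proof (intro conjI ballI)
  fix f assume "f \<in> {f \<in> F. f ` K \<subseteq> U}"
  then have "f \<in> F" "f ` K \<subseteq> U"
    by auto
  have "compact (f ` K)"
    using compact_continuous_image[OF continuous_on_subset[OF cont[OF \<open>f \<in> F\<close>] K(2)] K(1)] .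
  then obtain e where "e > 0" and e: "(\<Union>y\<in>f ` K. ball y e) \<subseteq> U"
    using compact_subset_open_imp_ball_epsilon_subset[OF _ \<open>open U\<close> \<open>f ` K \<subseteq> U\<close>] by blast
  show "\<exists>e>0. \<forall>g\<in>F. (\<forall>t\<in>D. dist (g t) (f t) < e) \<longrightarrow> g \<in> {f \<in> F. f ` K \<subseteq> U}"
  proof (intro exI[of _ e] conjI ballI impI)
    fix g assume "g \<in> F" and close: "\<forall>t\<in>D. dist (g t) (f t) < e"
    have "g t \<in> U" if "t \<in> K" for t
    proof -
      have "g t \<in> ball (f t) e"
        using close that K(2) by (auto simp: dist_commute)
      then show ?thesis
        using e that by blast
    qed
    then show "g \<in> {f \<in> F. f ` K \<subseteq> U}"
      using \<open>g \<in> F\<close> by blast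
  qed (fact \<open>e > 0\<close>)
qed (rule Collect_restrict)

lemma openin_compact_open_topology_imp_uniform:
  fixes D :: "'a::metric_space set" and F :: "('a \<Rightarrow> 'b::metric_space) set"
  assumes cont: "\<And>f. f \<in> F \<Longrightarrow> continuous_on D f" and S: "openin (compact_open_topology D F) S"
  shows "openin (uniform_topology D F) S"
proof -
  have "continuous_map (uniform_topology D F) (compact_open_topology D F) id"
    unfolding compact_open_topology_def
  proof (rule continuous_map_into_topology_subbase)
    fix V assume "\<exists>K U. compact K \<and> K \<subseteq> D \<and> open U \<and> V = {f \<in> F. f ` K \<subseteq> U}"
    then obtain K U where "compact K" "K \<subseteq> D" "open U" and V: "V = {f \<in> F. f ` K \<subseteq> U}"
      by blast
    then have "openin (uniform_topology D F) V"
      using openin_uniform_topology_subbasic[OF cont] by blast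
    moreover have "{x \<in> topspace (uniform_topology D F). id x \<in> V} = V"
      unfolding V topspace_uniform_topology by auto
    ultimately show "openin (uniform_topology D F) {x \<in> topspace (uniform_topology D F). id x \<in> V}"
      by simp
  qed (simp add: topspace_uniform_topology)
  then have "openin (uniform_topology D F) {f \<in> topspace (uniform_topology D F). id f \<in> S}"
    using S by (rule openin_continuous_map_preimage)
  moreover have "{f \<in> topspace (uniform_topology D F). id f \<in> S} = S"
    using openin_subset[OF S] by (auto simp: topspace_compact_open_topology topspace_uniform_topology)
  ultimately show ?thesis
    by simp
qed

lemma compact_finite_cover_small_oscillation:
  fixes D :: "'a::metric_space set" and f :: "'a \<Rightarrow> 'b::metric_space"
  assumes D: "compact D" and f: "continuous_on D f" and "e > 0"
  obtains C r where "finite C" "C \<subseteq> D" "D \<subseteq> (\<Union>x\<in>C. ball x r)"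
    "\<And>x. x \<in> C \<Longrightarrow> f ` (D \<inter> cball x r) \<subseteq> ball (f x) e"
proof -
  have "uniformly_continuous_on D f"
    using compact_uniformly_continuous[OF f D] .
  then obtain \<delta> where "\<delta> > 0"
    and \<delta>: "\<And>x y. x \<in> D \<Longrightarrow> y \<in> D \<Longrightarrow> dist y x < \<delta> \<Longrightarrow> dist (f y) (f x) < e"
    using uniformly_continuous_onE \<open>e > 0\<close> by metis
  have "D \<subseteq> (\<Union>x\<in>D. ball x (\<delta> / 2))"
    using \<open>\<delta> > 0\<close> by auto
  then obtain C where C: "C \<subseteq> D" "finite C" "D \<subseteq> (\<Union>x\<in>C. ball x (\<delta> / 2))"
    by (rule compactE_image[OF D, rotated]) auto
  have "f ` (D \<inter> cball x (\<delta> / 2)) \<subseteq> ball (f x) e" if "x \<in> C" for x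
  proof
    fix z assume "z \<in> f ` (D \<inter> cball x (\<delta> / 2))"
    then obtain y where "y \<in> D" "dist x y \<le> \<delta> / 2" "z = f y"
      by auto
    then show "z \<in> ball (f x) e"
      using \<delta>[of x y] that C(1) \<open>\<delta> > 0\<close> by (auto simp: dist_commute)
  qed
  with C show thesis
    by (intro that[of C "\<delta> / 2"]) auto
qed

lemma openin_uniform_topology_imp_compact_open:
  fixes D :: "'a::metric_space set" and F :: "('a \<Rightarrow> 'b::metric_space) set"
  assumes D: "compact D" and cont: "\<And>f. f \<in> F \<Longrightarrow> continuous_on D f"
    and S: "openin (uniform_topology D F) S"
  shows "openin (compact_open_topology D F) S"
  unfolding openin_subopen[of _ S]
proof
  fix f assume "f \<in> S"
  then obtain e where "f \<in> F" "e > 0" and e: "\<forall>g\<in>F. (\<forall>t\<in>D. dist (g t) (f t) < e) \<longrightarrow> g \<in> S"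
    using S unfolding openin_uniform_topology uniformly_open_def by blast
  obtain C r where C: "finite C" "C \<subseteq> D" "D \<subseteq> (\<Union>x\<in>C. ball x r)"
    and near: "\<And>x. x \<in> C \<Longrightarrow> f ` (D \<inter> cball x r) \<subseteq> ball (f x) (e / 2)"
    using compact_finite_cover_small_oscillation[OF D cont[OF \<open>f \<in> F\<close>] half_gt_zero[OF \<open>e > 0\<close>]]
    by blast
  define K where "K x = D \<inter> cball x r" for x
  define T where
    "T = (\<Inter>x\<in>C. {g \<in> F. g ` K x \<subseteq> ball (f x) (e / 2)}) \<inter> topspace (compact_open_topology D F)"
  have "openin (compact_open_topology D F) T"
    unfolding T_def using C by (intro openin_INT openin_compact_open_topology_subbasic)
      (auto simp: K_def intro: compact_Int_closed D)
  moreover have "f \<in> T"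
    using near \<open>f \<in> F\<close> unfolding T_def K_def topspace_compact_open_topology by blast
  moreover have "T \<subseteq> S"
  proof
    fix g assume "g \<in> T"
    have "dist (g t) (f t) < e" if "t \<in> D" for t
    proof -
      obtain x where "x \<in> C" "t \<in> ball x r"
        using C(3) \<open>t \<in> D\<close> by blast
      then have "t \<in> K x"
        using \<open>t \<in> D\<close> unfolding K_def by simp
      moreover have "g ` K x \<subseteq> ball (f x) (e / 2)"
        using \<open>g \<in> T\<close> \<open>x \<in> C\<close> unfolding T_def by blast
      ultimately have "g t \<in> ball (f x) (e / 2)" "f t \<in> ball (f x) (e / 2)"
        using near[OF \<open>x \<in> C\<close>] unfolding K_def by blast+
      then show ?thesis
        unfolding mem_ball by (rule dist_triangle_half_r)
    qed
    moreover have "g \<in> F"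
      using \<open>g \<in> T\<close> unfolding T_def topspace_compact_open_topology by blast
    ultimately show "g \<in> S"
      using e by blast
  qed
  ultimately show "\<exists>T. openin (compact_open_topology D F) T \<and> f \<in> T \<and> T \<subseteq> S"
    by blast
qed

lemma compact_open_topology_eq_uniform_topology:
  fixes D :: "'a::metric_space set" and F :: "('a \<Rightarrow> 'b::metric_space) set"
  assumes "compact D" and "\<And>f. f \<in> F \<Longrightarrow> continuous_on D f"
  shows "compact_open_topology D F = uniform_topology D F"
  unfolding topology_eq
proof (intro allI iffI)
  fix S
  show "openin (uniform_topology D F) S" if "openin (compact_open_topology D F) S"
    using openin_compact_open_topology_imp_uniform[OF assms(2) that] .
  show "openin (compact_open_topology D F) S" if "openin (uniform_topology D F) S"
    using openin_uniform_topology_imp_compact_open[OF assms that] .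
qed

lemma continuous_map_uniform_topology:
  assumes maps: "\<And>f. f \<in> F \<Longrightarrow> B f \<in> F'"
    and close: "\<And>f e. f \<in> F \<Longrightarrow> e > 0 \<Longrightarrow> \<exists>d>0. \<forall>g\<in>F.
      (\<forall>t\<in>D. dist (g t) (f t) < d) \<longrightarrow> (\<forall>t\<in>D'. dist (B g t) (B f t) < e)"
  shows "continuous_map (uniform_topology D F) (uniform_topology D' F') B"
  unfolding continuous_map_def topspace_uniform_topology
proof (intro conjI allI impI)
  show "B \<in> F \<rightarrow> F'"
    using maps by blast
  fix V assume "openin (uniform_topology D' F') V"
  then have V: "\<forall>f\<in>V. \<exists>e>0. \<forall>g\<in>F'. (\<forall>t\<in>D'. dist (g t) (f t) < e) \<longrightarrow> g \<in> V"
    unfolding openin_uniform_topology uniformly_open_def by blast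
  show "openin (uniform_topology D F) {f \<in> F. B f \<in> V}"
    unfolding openin_uniform_topology uniformly_open_def
  proof (intro conjI ballI)
    fix f assume f: "f \<in> {f \<in> F. B f \<in> V}"
    then obtain e where "e > 0" and e: "\<forall>g\<in>F'. (\<forall>t\<in>D'. dist (g t) (B f t) < e) \<longrightarrow> g \<in> V"
      using V by blast
    obtain d where "d > 0"
      and d: "\<forall>g\<in>F. (\<forall>t\<in>D. dist (g t) (f t) < d) \<longrightarrow> (\<forall>t\<in>D'. dist (B g t) (B f t) < e)"
      using close f \<open>e > 0\<close> by blast
    show "\<exists>d>0. \<forall>g\<in>F. (\<forall>t\<in>D. dist (g t) (f t) < d) \<longrightarrow> g \<in> {f \<in> F. B f \<in> V}"
    proof (intro exI[of _ d] conjI ballI impI)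
      fix g assume "g \<in> F" "\<forall>t\<in>D. dist (g t) (f t) < d"
      then have "\<forall>t\<in>D'. dist (B g t) (B f t) < e"
        using d by blast
      then have "B g \<in> V"
        using e maps[OF \<open>g \<in> F\<close>] by blast
      then show "g \<in> {f \<in> F. B f \<in> V}"
        using \<open>g \<in> F\<close> by blast
    qed (fact \<open>d > 0\<close>)
  qed (rule Collect_restrict)
qed

lemma compact_open_eq_uniform_topology:
  assumes "L > 0"
  shows "compact_open L M = uniform_topology {0..L} (Gmor L M)"
proof -
  have "compact_open L M = compact_open_topology {0..L} (Gmor L M)"
    unfolding compact_open_def compact_open_topology_def ..
  also have "\<dots> = uniform_topology {0..L} (Gmor L M)"
    using Gmor_continuous_on assms by (intro compact_open_topology_eq_uniform_topology compact_Icc)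
  finally show ?thesis .
qed

lemma topspace_compact_open: "topspace (compact_open L M) = Gmor L M"
  by (simp add: compact_open_def)

lemma tensor_dist_less:
  assumes "\<And>t. t \<in> {0..a} \<Longrightarrow> dist (psi1 t) (phi1 t) < d"
    and "\<And>t. t \<in> {0..c} \<Longrightarrow> dist (psi2 t) (phi2 t) < d" and t: "t \<in> {0..a + c}"
  shows "dist (tensor a c b psi1 psi2 t) (tensor a c b phi1 phi2 t) < d"
proof (cases "t \<le> a")
  case True
  then show ?thesis
    using assms(1)[of t] t unfolding tensor_def by simp
next
  case False
  then show ?thesis
    using assms(2)[of "t - a"] t unfolding tensor_def by (simp add: dist_real_def)
qed

lemma inv_into_Gmor_dist_less:
  assumes f: "f \<in> Gmor L M" and "L > 0" and y: "y \<in> {0<..<M}" and "\<eta> > 0"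
  shows "\<exists>d>0. \<forall>g\<in>Gmor L M. (\<forall>t\<in>{0..L}. dist (g t) (f t) < d) \<longrightarrow>
           dist (inv_into {0..L} g y) (inv_into {0..L} f y) < \<eta>"
proof -
  define s where "s = inv_into {0..L} f y"
  have s: "s \<in> {0<..<L}" "f s = y"
    using Gmor_inv_into_interior[OF f \<open>L > 0\<close> y] Gmor_inv_into[OF f] y unfolding s_def by auto
  define m where "m = min \<eta> (min s (L - s))"
  have "0 < m" "m \<le> \<eta>" "m \<le> s" "m \<le> L - s"
    using s \<open>\<eta> > 0\<close> unfolding m_def by auto
  define r where "r = m / 2"
  have r: "0 < r" "r < \<eta>" "s - r \<in> {0..L}" "s + r \<in> {0..L}"
    using \<open>0 < m\<close> \<open>m \<le> \<eta>\<close> \<open>m \<le> s\<close> \<open>m \<le> L - s\<close> unfolding r_def by auto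
  have "f (s - r) < y" "y < f (s + r)"
    using Gmor_less_iff[OF f \<open>L > 0\<close>, of "s - r" s] Gmor_less_iff[OF f \<open>L > 0\<close>, of s "s + r"] s r
    by auto
  define d where "d = min (y - f (s - r)) (f (s + r) - y)"
  show ?thesis
  proof (intro exI[of _ d] conjI ballI impI)
    show "d > 0"
      unfolding d_def using \<open>f (s - r) < y\<close> \<open>y < f (s + r)\<close> by simp
    fix g assume g: "g \<in> Gmor L M" and close: "\<forall>t\<in>{0..L}. dist (g t) (f t) < d"
    define s' where "s' = inv_into {0..L} g y"
    have s': "s' \<in> {0..L}" "g s' = y"
      using Gmor_inv_into[OF g] y unfolding s'_def by auto
    have "dist (g (s - r)) (f (s - r)) < d" "dist (g (s + r)) (f (s + r)) < d"
      using close r(3,4) by auto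
    then have "g (s - r) < g s'" "g s' < g (s + r)"
      unfolding d_def s'(2) by (auto simp: dist_real_def)
    then have "s - r < s'" "s' < s + r"
      using Gmor_less_iff[OF g \<open>L > 0\<close>] s'(1) r(3,4) by auto
    then show "dist (inv_into {0..L} g y) (inv_into {0..L} f y) < \<eta>"
      using r(2) unfolding s_def[symmetric] s'_def[symmetric] by (simp add: dist_real_def)
  qed
qed

lemma braid_dist_less:
  assumes "L > 0" "l1 > 0" "l2 > 0" and f: "f \<in> Gmor L (l1 + l2)" and "e > 0"
  shows "\<exists>d>0. \<forall>g\<in>Gmor L (l1 + l2). (\<forall>t\<in>{0..L}. dist (g t) (f t) < d) \<longrightarrow>
           (\<forall>t\<in>{0..L}. dist (braid L l1 l2 g t) (braid L l1 l2 f t) < e)"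
proof -
  define h where "h = tensor L L (l1 + l2) f f"
  have "continuous_on {0..L + L} h"
    unfolding h_def using Gmor_continuous_on[OF tensor_Gmor[OF f f]] assms by simp
  then have "uniformly_continuous_on {0..L + L} h"
    by (rule compact_uniformly_continuous[OF _ compact_Icc])
  then obtain \<eta> where "\<eta> > 0"
    and \<eta>: "\<And>x x'. x \<in> {0..L + L} \<Longrightarrow> x' \<in> {0..L + L} \<Longrightarrow> dist x' x < \<eta> \<Longrightarrow> dist (h x') (h x) < e / 2"
    using uniformly_continuous_onE half_gt_zero[OF \<open>e > 0\<close>] by metis
  obtain d where "d > 0" and d: "\<forall>g\<in>Gmor L (l1 + l2). (\<forall>t\<in>{0..L}. dist (g t) (f t) < d) \<longrightarrow>
      dist (inv_into {0..L} g l1) (inv_into {0..L} f l1) < \<eta>"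
    using inv_into_Gmor_dist_less[OF f \<open>L > 0\<close> _ \<open>\<eta> > 0\<close>, of l1] assms by auto
  show ?thesis
  proof (intro exI[of _ "min d (e / 2)"] conjI ballI impI)
    show "min d (e / 2) > 0"
      using \<open>d > 0\<close> \<open>e > 0\<close> by simp
    fix g t assume g: "g \<in> Gmor L (l1 + l2)" and close: "\<forall>t\<in>{0..L}. dist (g t) (f t) < min d (e / 2)"
      and t: "t \<in> {0..L}"
    define s where "s = inv_into {0..L} f l1"
    define s' where "s' = inv_into {0..L} g l1"
    have "s \<in> {0..L}" "s' \<in> {0..L}"
      using Gmor_inv_into(1)[OF f] Gmor_inv_into(1)[OF g] assms unfolding s_def s'_def by auto
    have "dist s' s < \<eta>"
      using d g close unfolding s_def s'_def by auto
    have "braid L l1 l2 g t = tensor L L (l1 + l2) g g (t + s') - l1"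
      "braid L l1 l2 f t = h (t + s) - l1"
      using f g t unfolding braid_def s_def s'_def h_def by simp_all
    then have "dist (braid L l1 l2 g t) (braid L l1 l2 f t) =
        dist (tensor L L (l1 + l2) g g (t + s')) (h (t + s))"
      by (simp add: dist_real_def)
    also have "\<dots> \<le> dist (tensor L L (l1 + l2) g g (t + s')) (h (t + s')) + dist (h (t + s')) (h (t + s))"
      by (rule dist_triangle)
    also have "\<dots> < e / 2 + e / 2"
    proof (rule add_strict_mono)
      show "dist (tensor L L (l1 + l2) g g (t + s')) (h (t + s')) < e / 2"
        unfolding h_def using close t \<open>s' \<in> {0..L}\<close> by (intro tensor_dist_less) auto
      show "dist (h (t + s')) (h (t + s)) < e / 2"
        using \<eta> t \<open>s \<in> {0..L}\<close> \<open>s' \<in> {0..L}\<close> \<open>dist s' s < \<eta>\<close> by (simp add: dist_real_def)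
    qed
    finally show "dist (braid L l1 l2 g t) (braid L l1 l2 f t) < e"
      by simp
  qed
qed

lemma continuous_map_braid:
  assumes "L > 0" "l1 > 0" "l2 > 0"
  shows "continuous_map (compact_open L (l1 + l2)) (compact_open L (l2 + l1)) (braid L l1 l2)"
  unfolding compact_open_eq_uniform_topology[OF \<open>L > 0\<close>]
  by (intro continuous_map_uniform_topology braid_Gmor braid_dist_less assms)

lemma homeomorphic_map_braid:
  assumes "L > 0" "l1 > 0" "l2 > 0"
  shows "homeomorphic_map (compact_open L (l1 + l2)) (compact_open L (l2 + l1)) (braid L l1 l2)"
  unfolding homeomorphic_map_maps homeomorphic_maps_def topspace_compact_open
  using continuous_map_braid[OF assms] continuous_map_braid[of L l2 l1] braid_braid[of L l1 l2]
    braid_braid[of L l2 l1] assms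
  by (intro exI[of _ "braid L l2 l1"]) auto

theorem proposition4p8:
  fixes L l1 l2 :: real
  assumes "L > 0" and "l1 > 0" and "l2 > 0"
  shows "(\<exists>!B. B \<in> Gmor L (l1 + l2) \<rightarrow>\<^sub>E Gmor L (l2 + l1) \<and>
            (\<forall>l1' l2' phi1 phi2. l1' > 0 \<longrightarrow> l2' > 0 \<longrightarrow> l1' + l2' = L \<longrightarrow>
                phi1 \<in> Gmor l1' l1 \<longrightarrow> phi2 \<in> Gmor l2' l2 \<longrightarrow>
                B (tensor l1' l2' l1 phi1 phi2) = tensor l2' l1' l2 phi2 phi1))
       \<and> (\<forall>B. B \<in> Gmor L (l1 + l2) \<rightarrow>\<^sub>E Gmor L (l2 + l1) \<and>
            (\<forall>l1' l2' phi1 phi2. l1' > 0 \<longrightarrow> l2' > 0 \<longrightarrow> l1' + l2' = L \<longrightarrow>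
                phi1 \<in> Gmor l1' l1 \<longrightarrow> phi2 \<in> Gmor l2' l2 \<longrightarrow>
                B (tensor l1' l2' l1 phi1 phi2) = tensor l2' l1' l2 phi2 phi1)
            \<longrightarrow> homeomorphic_map (compact_open L (l1 + l2)) (compact_open L (l2 + l1)) B)"
    (is "(\<exists>!B. ?braiding B) \<and> (\<forall>B. ?braiding B \<longrightarrow> ?homeomorphic B)")
proof -
  have braiding: "?braiding (braid L l1 l2)"
    using braid_PiE[OF assms] braid_tensor assms by simp
  have unique: "B = braid L l1 l2" if "?braiding B" for B
    using that by (intro braid_unique assms) auto
  have "\<exists>!B. ?braiding B"
    using braiding unique by (rule ex1I)
  moreover have "\<forall>B. ?braiding B \<longrightarrow> ?homeomorphic B"
    using unique homeomorphic_map_braid[OF assms] by auto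
  ultimately show ?thesis ..
qed

end
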